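(* Assume (A1)–(A3) hold and let $\{x_k\}$ be the sequence generated by LMTR. Then $\{D_k\}$ is convergent and $\lim_{k\to\infty}D_k=\lim_{k\to\infty}\psi(x_k)$. Further, the algorithm either stops after finitely many iterations at an $x_k$ with $\|h(x_k)\|\le\varepsilon$ or $\|\nabla\psi(x_k)\|\le\varepsilon$, or generates an infinite sequence $\{x_k\}$ with $\lim_{k\to\infty}\|\nabla\psi(x_k)\|=0$, so that every accumulation point of $\{x_k\}$ is a stationary point of $\psi$.
   Context: Let $h:\mathbb{R}^m\to\mathbb{R}^n$ be continuously differentiable; $\nabla h(x)\in\mathbb{R}^{m\times n}$ denotes the transposed Jacobian, $\|\cdot\|$ the Euclidean norm (operator norm for matrices), $\psi(x):=\frac12\|h(x)\|^2$, $\nabla\psi(x)=\nabla h(x)h(x)$; $\Omega:=\{x:h(x)=0\}\ne\emptyset$; $\mathcal{L}(x_0):=\{x:\psi(x)\le\psi(x_0)\}$; $q_k(d):=\frac12\|\nabla h(x_k)^Td+h(x_k)\|^2$. Assumptions: (A1) for some $x^*\in\Omega$ there are $\delta\in\,]0,1]$, $\beta>0$, $\mathtt r\in\,]0,1[$ with $\beta\,\mathrm{dist}(x,\Omega)\le\|h(x)\|^\delta$ whenever $\|x-x^*\|\le\mathtt r$. (A2) $\mathcal{L}(x_0)$ is bounded. (A3) $\|\nabla h(x)-\nabla h(y)\|\le L\|x-y\|$ for all $x,y$. Algorithm LMTR: parameters $x_0$, $\varepsilon>0$, $\eta\in\,]0,4\delta[$, $0<\rho_2<1<\rho_1$, $0<\upsilon_1<\upsilon_2<1$,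 $\mu_{\min}>0$, $0\le\xi_{\min}\le\xi_{\max}$, $0\le\omega_{\min}\le\omega_{\max}$ with $\xi_{\min}+\omega_{\min}>0$, $0\le\theta_{\min}\le\theta_{\max}<1$, sequences $\xi_k\in[\xi_{\min},\xi_{\max}]$, $\omega_k\in[\omega_{\min},\omega_{\max}]$, $\theta_k\in[\theta_{\min},\theta_{\max}]$; $\lambda_0:=1$, $D_0:=\psi(x_0)$. At iteration $k$: stop if $\|h(x_k)\|\le\varepsilon$ or $\|\nabla\psi(x_k)\|\le\varepsilon$. Otherwise $\mu_k:=\xi_k\|h(x_k)\|^\eta+\omega_k\|\nabla h(x_k)h(x_k)\|^\eta$. For a value $\lambda>0$ set $\widehat\mu:=\max\{\mu_{\min},\lambda\mu_k\}$, let $d$ solve $(\nabla h(x_k)\nabla h(x_k)^T+\widehat\mu I)d=-\nabla h(x_k)h(x_k)$ and $\widehat r:=(D_k-\psi(x_k+d))/(q_k(0)-q_k(d))$. Starting from $\lambda=\lambda_k$, replace $\lambda$ by $\rho_1\lambda$ as long as $\widehat r<\upsilon_1$; $p_k$ is the number of replacements and $\widehat\mu_k,d_k,\widehat r_k$ the accepted values. Then $x_{k+1}:=x_k+d_k$, $\lambda_{k+1}:=\rho_2\rho_1^{p_k}\lambda_k$ if $\widehat r_k\ge\upsilon_2$, else $\lambda_{k+1}:=\rho_1^{p_k}\lambda_k$, and $D_{k+1}:=(1-\theta_k)\psi(x_{k+1})+\theta_kD_k$. *)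

theory Defs
  imports "HOL-Analysis.Analysis"
begin

text \<open>The transposed Jacobian nabla h(x) (an m x n matrix) is a matrix-valued function
  G :: real^'m \<Rightarrow> real^'n^'m, linked to h by
  (h has_derivative (\<lambda>d. transpose (G x) *v d)) (at x).\<close>

definition psi :: "('a::real_normed_vector \<Rightarrow> 'b::real_normed_vector) \<Rightarrow> 'a \<Rightarrow> real" where
  "psi h x = (1/2) * (norm (h x))^2"

definition grad_psi :: "(real^'m \<Rightarrow> real^'n^'m) \<Rightarrow> (real^'m \<Rightarrow> real^'n) \<Rightarrow> real^'m \<Rightarrow> real^'m" where
  "grad_psi G h x = G x *v h x"

definition qmodel :: "(real^'m \<Rightarrow> real^'n^'m) \<Rightarrow> (real^'m \<Rightarrow> real^'n) \<Rightarrow> real^'m \<Rightarrow> real^'m \<Rightarrow> real" where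
  "qmodel G h x d = (1/2) * (norm (transpose (G x) *v d + h x))^2"

text \<open>The solution d of (nabla h nabla h^T + mu I) d = - nabla h h (the matrix is
  positive definite for mu > 0, hence invertible).\<close>
definition lm_dir :: "(real^'m \<Rightarrow> real^'n^'m) \<Rightarrow> (real^'m \<Rightarrow> real^'n) \<Rightarrow> real^'m \<Rightarrow> real \<Rightarrow> real^'m" where
  "lm_dir G h x mu = matrix_inv (G x ** transpose (G x) + mu *\<^sub>R mat 1) *v (- (G x *v h x))"

definition lm_ratio :: "(real^'m \<Rightarrow> real^'n^'m) \<Rightarrow> (real^'m \<Rightarrow> real^'n) \<Rightarrow> real \<Rightarrow> real^'m \<Rightarrow> real^'m \<Rightarrow> real" where
  "lm_ratio G h D x d = (D - psi h (x + d)) / (qmodel G h x 0 - qmodel G h x d)"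

end

theory Submission
  imports Defs
begin

(* With \<epsilon> > 0 the algorithm always stops, so the second alternative never occurs.
  Along a run that never stops, D_k dominates psi(x_k) and decreases at least by
  (1 - \<theta>max) \<upsilon>1 times the predicted reduction; hence the iterates stay in the bounded
  level set of x0, where h, the Jacobian and \<mu>_k are bounded. A Taylor estimate with the
  Lipschitz Jacobian shows that every trial step with \<lambda> above a fixed threshold is very
  successful, so \<lambda> and with it the regularisation parameter stay bounded. The predicted
  reduction is then bounded below by a multiple of the squared gradient norm, which
  exceeds \<epsilon>^2, and D_k would drop below 0. *)

lemma inner_transpose_mult_vec:
  fixes A :: "real^'n^'m"
  shows "inner v (A *v w) = inner (transpose A *v v) w"
  by (simp add: dot_lmul_matrix)

lemma lm_matrix_mult_vec:
  fixes A :: "real^'n^'m"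
  shows "(A ** transpose A + \<mu> *\<^sub>R mat 1) *v v = A *v (transpose A *v v) + \<mu> *\<^sub>R v"
  by (simp add: matrix_vector_mult_add_rdistrib matrix_vector_mul_assoc[symmetric]
      flip: scaleR_matrix_vector_assoc)

lemma inner_lm_matrix_mult_vec:
  fixes A :: "real^'n^'m"
  shows "inner v ((A ** transpose A + \<mu> *\<^sub>R mat 1) *v v) = (norm (transpose A *v v))\<^sup>2 + \<mu> * (norm v)\<^sup>2"
  unfolding lm_matrix_mult_vec by (simp add: inner_add_right inner_transpose_mult_vec power2_norm_eq_inner)

lemma invertible_lm_matrix:
  fixes A :: "real^'n^'m"
  assumes "0 < \<mu>"
  shows "invertible (A ** transpose A + \<mu> *\<^sub>R mat 1)"
proof -
  have "v = 0" if "(A ** transpose A + \<mu> *\<^sub>R mat 1) *v v = 0" for v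
  proof -
    have "(norm (transpose A *v v))\<^sup>2 + \<mu> * (norm v)\<^sup>2 = 0"
      using that inner_lm_matrix_mult_vec[of v A \<mu>] by simp
    moreover have "0 \<le> (norm (transpose A *v v))\<^sup>2"
      by (rule zero_le_power2)
    ultimately have "\<mu> * (norm v)\<^sup>2 \<le> 0"
      by linarith
    then show "v = 0"
      using assms by (simp add: mult_le_0_iff)
  qed
  then show ?thesis
    using matrix_left_invertible_ker invertible_left_inverse by blast
qed

lemma matrix_mul_matrix_inv:
  assumes "invertible A"
  shows "A ** matrix_inv A = mat 1"
  using assms unfolding invertible_def matrix_inv_def by (rule someI_ex[THEN conjunct1])

lemma lm_dir_equation:
  assumes "0 < \<mu>"
  shows "G x *v (transpose (G x) *v lm_dir G h x \<mu>) + \<mu> *\<^sub>R lm_dir G h x \<mu> = - grad_psi G h x"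
proof -
  let ?M = "G x ** transpose (G x) + \<mu> *\<^sub>R mat 1"
  have "?M *v lm_dir G h x \<mu> = - grad_psi G h x"
    using matrix_mul_matrix_inv[OF invertible_lm_matrix[OF assms, of "G x"]]
    by (simp add: lm_dir_def grad_psi_def matrix_vector_mul_assoc)
  then show ?thesis
    by (simp only: lm_matrix_mult_vec)
qed

lemma lm_dir_nonzero:
  assumes "0 < \<mu>" and "grad_psi G h x \<noteq> 0"
  shows "lm_dir G h x \<mu> \<noteq> 0"
  using lm_dir_equation[OF assms(1), of G x h] assms(2) by auto

lemma inner_lm_dir_grad_psi:
  assumes "0 < \<mu>"
  shows "- inner (lm_dir G h x \<mu>) (grad_psi G h x)
    = (norm (transpose (G x) *v lm_dir G h x \<mu>))\<^sup>2 + \<mu> * (norm (lm_dir G h x \<mu>))\<^sup>2"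
proof -
  have "- inner (lm_dir G h x \<mu>) (grad_psi G h x)
      = inner (lm_dir G h x \<mu>) ((G x ** transpose (G x) + \<mu> *\<^sub>R mat 1) *v lm_dir G h x \<mu>)"
    unfolding lm_matrix_mult_vec lm_dir_equation[OF assms] by simp
  then show ?thesis
    by (simp only: inner_lm_matrix_mult_vec)
qed

lemma lm_predicted_reduction:
  assumes "0 < \<mu>"
  shows "qmodel G h x 0 - qmodel G h x (lm_dir G h x \<mu>)
    = (norm (transpose (G x) *v lm_dir G h x \<mu>))\<^sup>2 / 2 + \<mu> * (norm (lm_dir G h x \<mu>))\<^sup>2"
proof -
  define d where "d = lm_dir G h x \<mu>"
  define a where "a = transpose (G x) *v d"
  have "inner a (h x) = inner d (grad_psi G h x)"
    by (simp add: a_def grad_psi_def inner_transpose_mult_vec)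
  moreover have "- inner d (grad_psi G h x) = (norm a)\<^sup>2 + \<mu> * (norm d)\<^sup>2"
    using inner_lm_dir_grad_psi[OF assms, of G h x] unfolding a_def d_def .
  moreover have "qmodel G h x d = ((norm a)\<^sup>2 + 2 * inner a (h x) + (norm (h x))\<^sup>2) / 2"
    unfolding qmodel_def a_def[symmetric]
    by (simp add: power2_norm_eq_inner inner_add_left inner_add_right inner_commute)
  moreover have "qmodel G h x 0 = (norm (h x))\<^sup>2 / 2"
    by (simp add: qmodel_def)
  ultimately show ?thesis
    unfolding d_def[symmetric] a_def[symmetric] by (simp add: field_simps)
qed

lemma qmodel_lm_dir_le:
  assumes "0 < \<mu>"
  shows "qmodel G h x (lm_dir G h x \<mu>) \<le> qmodel G h x 0"
proof -
  have "0 \<le> (norm (transpose (G x) *v lm_dir G h x \<mu>))\<^sup>2 / 2 + \<mu> * (norm (lm_dir G h x \<mu>))\<^sup>2"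
    using assms by simp
  then show ?thesis
    using lm_predicted_reduction[OF assms, of G h x] by linarith
qed

lemma lm_predicted_reduction_pos:
  assumes "0 < \<mu>" and "grad_psi G h x \<noteq> 0"
  shows "0 < qmodel G h x 0 - qmodel G h x (lm_dir G h x \<mu>)"
proof -
  have "0 < \<mu> * (norm (lm_dir G h x \<mu>))\<^sup>2"
    using assms lm_dir_nonzero[OF assms] by simp
  then show ?thesis
    unfolding lm_predicted_reduction[OF assms(1)] by (simp add: add_nonneg_pos)
qed

lemma lm_dir_norm_le:
  assumes "0 < \<mu>"
  shows "\<mu> * norm (lm_dir G h x \<mu>) \<le> norm (grad_psi G h x)"
proof -
  define d where "d = lm_dir G h x \<mu>"
  have "\<mu> * norm d * norm d \<le> - inner d (grad_psi G h x)"
    using inner_lm_dir_grad_psi[OF assms, of G h x] by (simp add: d_def power2_eq_square)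
  also have "\<dots> \<le> norm d * norm (grad_psi G h x)"
    using Cauchy_Schwarz_ineq2[of d "grad_psi G h x"] by linarith
  finally show ?thesis
    unfolding d_def[symmetric] by (cases "d = 0") (simp_all add: mult.commute)
qed

lemma grad_psi_sq_le_predicted_reduction:
  assumes "0 < \<mu>" and C: "\<And>v. norm (G x *v v) \<le> C * norm v"
  shows "(norm (grad_psi G h x))\<^sup>2
    \<le> 2 * max (2 * C\<^sup>2) \<mu> * (qmodel G h x 0 - qmodel G h x (lm_dir G h x \<mu>))"
proof -
  define d where "d = lm_dir G h x \<mu>"
  define a where "a = transpose (G x) *v d"
  have "norm (grad_psi G h x) = norm (G x *v a + \<mu> *\<^sub>R d)"
    unfolding a_def d_def lm_dir_equation[OF assms(1)] by simp
  also have "\<dots> \<le> C * norm a + \<mu> * norm d"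
    using norm_triangle_ineq[of "G x *v a" "\<mu> *\<^sub>R d"] C[of a] assms(1) by simp
  finally have "(norm (grad_psi G h x))\<^sup>2 \<le> (C * norm a + \<mu> * norm d)\<^sup>2"
    by (simp add: power_mono)
  also have "\<dots> \<le> 2 * C\<^sup>2 * (norm a)\<^sup>2 + 2 * \<mu> * (\<mu> * (norm d)\<^sup>2)"
    using zero_le_power2[of "C * norm a - \<mu> * norm d"] by (simp add: power2_eq_square algebra_simps)
  also have "\<dots> \<le> max (2 * C\<^sup>2) \<mu> * (norm a)\<^sup>2 + 2 * max (2 * C\<^sup>2) \<mu> * (\<mu> * (norm d)\<^sup>2)"
    using assms(1) by (intro add_mono mult_right_mono mult_left_mono) auto
  also have "\<dots> = 2 * max (2 * C\<^sup>2) \<mu> * ((norm a)\<^sup>2 / 2 + \<mu> * (norm d)\<^sup>2)"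
    by (simp add: algebra_simps)
  finally show ?thesis
    unfolding lm_predicted_reduction[OF assms(1)] a_def d_def .
qed

lemma norm_transpose_mult_vec_le:
  fixes M :: "real^'n^'m"
  shows "norm (transpose M *v v) \<le> onorm ((*v) M) * norm v"
proof (cases "transpose M *v v = 0")
  case True
  then show ?thesis
    by (simp add: onorm_pos_le matrix_vector_mul_bounded_linear)
next
  case False
  let ?w = "transpose M *v v"
  have "norm ?w * norm ?w = inner ?w ?w"
    by (simp only: dot_square_norm power2_eq_square)
  also have "\<dots> = inner v (M *v ?w)"
    by (rule inner_transpose_mult_vec[symmetric])
  also have "\<dots> \<le> norm v * norm (M *v ?w)"
    by (rule norm_cauchy_schwarz)
  also have "\<dots> \<le> norm v * (onorm ((*v) M) * norm ?w)"
    by (intro mult_left_mono onorm[OF matrix_vector_mul_bounded_linear]) simp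
  finally have "norm ?w * norm ?w \<le> (onorm ((*v) M) * norm v) * norm ?w"
    by (simp only: ac_simps)
  then show ?thesis
    using False by simp
qed

lemma onorm_transpose_diff_le:
  fixes P Q :: "real^'n^'m"
  shows "onorm (\<lambda>v. transpose P *v v - transpose Q *v v) \<le> onorm (\<lambda>v. (P - Q) *v v)"
proof (rule onorm_bound)
  show "0 \<le> onorm (\<lambda>v. (P - Q) *v v)"
    by (simp add: onorm_pos_le)
  fix v :: "real^'m"
  have "transpose P *v v - transpose Q *v v = transpose (P - Q) *v v"
    by (simp add: vec_eq_iff matrix_vector_mult_def transpose_def sum_subtractf algebra_simps)
  then show "norm (transpose P *v v - transpose Q *v v) \<le> onorm (\<lambda>v. (P - Q) *v v) * norm v"
    using norm_transpose_mult_vec_le[of "P - Q" v] by simp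
qed

lemma norm_remainder_le_lipschitz_derivative:
  fixes f :: "'a::real_normed_vector \<Rightarrow> 'b::real_normed_vector"
  assumes deriv: "\<And>y. (f has_derivative f' y) (at y)"
    and lipschitz: "\<And>y z. onorm (\<lambda>v. f' y v - f' z v) \<le> L * norm (y - z)"
    and "0 \<le> L"
  shows "norm (f (x + d) - f x - f' x d) \<le> L * (norm d)\<^sup>2"
proof -
  let ?S = "closed_segment x (x + d)"
  have lin: "bounded_linear (f' x)"
    using deriv by (rule has_derivative_bounded_linear)
  have "((\<lambda>y. f y - f' x y) has_derivative (\<lambda>v. f' y v - f' x v)) (at y within ?S)" for y
    by (rule has_derivative_at_withinI, rule has_derivative_diff[OF deriv bounded_linear_imp_has_derivative[OF lin]])
  moreover have "onorm (\<lambda>v. f' y v - f' x v) \<le> L * norm d" if "y \<in> ?S" for y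
  proof -
    have "norm (y - x) \<le> norm d"
      using segment_bound1[OF that] by simp
    then have "L * norm (y - x) \<le> L * norm d"
      using \<open>0 \<le> L\<close> by (rule mult_left_mono)
    then show ?thesis
      using lipschitz[of y x] by linarith
  qed
  ultimately have "norm ((f (x + d) - f' x (x + d)) - (f x - f' x x)) \<le> L * norm d * norm (x + d - x)"
    by (rule differentiable_bound[OF convex_closed_segment]) auto
  moreover have "(f (x + d) - f' x (x + d)) - (f x - f' x x) = f (x + d) - f x - f' x d"
    by (simp add: linear_add[OF bounded_linear.linear[OF lin]])
  ultimately show ?thesis
    by (simp add: power2_eq_square mult.assoc)
qed

lemma norm_remainder_le_lipschitz_jacobian:
  fixes h :: "real^'m \<Rightarrow> real^'n" and G :: "real^'m \<Rightarrow> real^'n^'m"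
  assumes "\<And>y. (h has_derivative (\<lambda>d. transpose (G y) *v d)) (at y)"
    and "\<And>y z. onorm (\<lambda>v. (G y - G z) *v v) \<le> L * norm (y - z)" and "0 \<le> L"
  shows "norm (h (x + d) - h x - transpose (G x) *v d) \<le> L * (norm d)\<^sup>2"
proof (rule norm_remainder_le_lipschitz_derivative[where f' = "\<lambda>y v. transpose (G y) *v v"])
  show "\<And>y. (h has_derivative (\<lambda>v. transpose (G y) *v v)) (at y)"
    by (rule assms(1))
  show "\<And>y z. onorm (\<lambda>v. transpose (G y) *v v - transpose (G z) *v v) \<le> L * norm (y - z)"
    using order_trans[OF onorm_transpose_diff_le assms(2)] .
qed (rule assms(3))

lemma psi_lm_step_le:
  fixes h :: "real^'m \<Rightarrow> real^'n" and G :: "real^'m \<Rightarrow> real^'n^'m"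
  assumes deriv: "\<And>y. (h has_derivative (\<lambda>d. transpose (G y) *v d)) (at y)"
    and lipschitz: "\<And>y z. onorm (\<lambda>v. (G y - G z) *v v) \<le> L * norm (y - z)" and "0 \<le> L"
    and "0 < \<mu>min" "\<mu>min \<le> \<mu>" "norm (h x) \<le> H" "norm (grad_psi G h x) \<le> \<Gamma>"
  shows "psi h (x + lm_dir G h x \<mu>)
    \<le> qmodel G h x (lm_dir G h x \<mu>) + (H * L + (L * \<Gamma> / \<mu>min)\<^sup>2 / 2) * (norm (lm_dir G h x \<mu>))\<^sup>2"
proof -
  define d where "d = lm_dir G h x \<mu>"
  define u where "u = transpose (G x) *v d + h x"
  define R where "R = h (x + d) - h x - transpose (G x) *v d"
  have "0 < \<mu>"
    using assms by linarith
  have "0 \<le> H"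
    using \<open>norm (h x) \<le> H\<close> norm_ge_zero[of "h x"] by linarith
  have "norm u \<le> H"
    using qmodel_lm_dir_le[OF \<open>0 < \<mu>\<close>, of G h x] \<open>norm (h x) \<le> H\<close>
    by (simp add: qmodel_def u_def d_def power_mono_iff)
  have "norm R \<le> L * (norm d)\<^sup>2"
    unfolding R_def using deriv lipschitz \<open>0 \<le> L\<close> by (rule norm_remainder_le_lipschitz_jacobian)
  have "\<mu>min * norm d \<le> \<Gamma>"
    using lm_dir_norm_le[OF \<open>0 < \<mu>\<close>, of G h x] mult_right_mono[OF \<open>\<mu>min \<le> \<mu>\<close> norm_ge_zero[of d]]
      \<open>norm (grad_psi G h x) \<le> \<Gamma>\<close> unfolding d_def[symmetric] by linarith
  then have "L * norm d \<le> L * \<Gamma> / \<mu>min"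
    using \<open>0 < \<mu>min\<close> \<open>0 \<le> L\<close> by (simp add: field_simps mult_left_mono)
  then have "norm R \<le> L * \<Gamma> / \<mu>min * norm d"
    using \<open>norm R \<le> L * (norm d)\<^sup>2\<close> mult_right_mono[of "L * norm d" "L * \<Gamma> / \<mu>min" "norm d"]
    by (simp add: power2_eq_square mult.assoc)
  then have "(norm R)\<^sup>2 \<le> (L * \<Gamma> / \<mu>min)\<^sup>2 * (norm d)\<^sup>2"
    by (simp add: power_mono flip: power_mult_distrib)
  have "psi h (x + d) \<le> (norm u)\<^sup>2 / 2 + norm u * norm R + (norm R)\<^sup>2 / 2"
  proof -
    have "norm (h (x + d)) \<le> norm u + norm R"
      using norm_triangle_ineq[of u R] by (simp add: u_def R_def)
    then have "(norm (h (x + d)))\<^sup>2 \<le> (norm u + norm R)\<^sup>2"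
      by (simp add: power_mono)
    then show ?thesis
      by (simp add: psi_def power2_eq_square algebra_simps)
  qed
  also have "\<dots> \<le> (norm u)\<^sup>2 / 2 + (H * L + (L * \<Gamma> / \<mu>min)\<^sup>2 / 2) * (norm d)\<^sup>2"
    using mult_mono[OF \<open>norm u \<le> H\<close> \<open>norm R \<le> L * (norm d)\<^sup>2\<close> \<open>0 \<le> H\<close> norm_ge_zero]
      \<open>(norm R)\<^sup>2 \<le> (L * \<Gamma> / \<mu>min)\<^sup>2 * (norm d)\<^sup>2\<close>
    by (simp add: algebra_simps)
  moreover have "qmodel G h x d = (norm u)\<^sup>2 / 2"
    by (simp add: qmodel_def u_def)
  ultimately show ?thesis
    unfolding d_def[symmetric] by linarith
qed

lemma lm_ratio_ge_large_mu:
  fixes h :: "real^'m \<Rightarrow> real^'n" and G :: "real^'m \<Rightarrow> real^'n^'m"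
  assumes deriv: "\<And>y. (h has_derivative (\<lambda>d. transpose (G y) *v d)) (at y)"
    and lipschitz: "\<And>y z. onorm (\<lambda>v. (G y - G z) *v v) \<le> L * norm (y - z)" and "0 \<le> L"
    and "0 < \<mu>min" "\<mu>min \<le> \<mu>"
    and "psi h x \<le> D" "norm (h x) \<le> H" "norm (grad_psi G h x) \<le> \<Gamma>" "grad_psi G h x \<noteq> 0"
    and large: "H * L + (L * \<Gamma> / \<mu>min)\<^sup>2 / 2 \<le> (1 - \<upsilon>) * \<mu>"
  shows "\<upsilon> \<le> lm_ratio G h D x (lm_dir G h x \<mu>)"
proof -
  define d where "d = lm_dir G h x \<mu>"
  define pred where "pred = qmodel G h x 0 - qmodel G h x d"
  have "0 < \<mu>"
    using assms by linarith
  have "0 < pred"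
    unfolding pred_def d_def using \<open>0 < \<mu>\<close> \<open>grad_psi G h x \<noteq> 0\<close> by (rule lm_predicted_reduction_pos)
  have "0 \<le> 1 - \<upsilon>"
  proof -
    have "0 \<le> H"
      using \<open>norm (h x) \<le> H\<close> norm_ge_zero[of "h x"] by linarith
    then have "0 \<le> H * L + (L * \<Gamma> / \<mu>min)\<^sup>2 / 2"
      using \<open>0 \<le> L\<close> by simp
    then have "0 \<le> (1 - \<upsilon>) * \<mu>"
      using large by linarith
    then show ?thesis
      using \<open>0 < \<mu>\<close> by (simp add: zero_le_mult_iff)
  qed
  have "psi h (x + d) \<le> qmodel G h x d + (H * L + (L * \<Gamma> / \<mu>min)\<^sup>2 / 2) * (norm d)\<^sup>2"
    unfolding d_def using deriv lipschitz \<open>0 \<le> L\<close> \<open>0 < \<mu>min\<close> \<open>\<mu>min \<le> \<mu>\<close> \<open>norm (h x) \<le> H\<close>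
      \<open>norm (grad_psi G h x) \<le> \<Gamma>\<close>
    by (rule psi_lm_step_le)
  also have "\<dots> \<le> qmodel G h x d + (1 - \<upsilon>) * (\<mu> * (norm d)\<^sup>2)"
    using mult_right_mono[OF large zero_le_power2[of "norm d"]] by (simp add: mult.assoc)
  also have "\<dots> \<le> qmodel G h x d + (1 - \<upsilon>) * pred"
    using lm_predicted_reduction[OF \<open>0 < \<mu>\<close>, of G h x] \<open>0 \<le> 1 - \<upsilon>\<close>
    unfolding pred_def d_def by (intro add_left_mono mult_left_mono) simp_all
  finally have "psi h (x + d) \<le> qmodel G h x d + pred - \<upsilon> * pred"
    by (simp add: algebra_simps)
  moreover have "qmodel G h x 0 = psi h x"
    by (simp add: qmodel_def psi_def)
  ultimately have "\<upsilon> * pred \<le> D - psi h (x + d)"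
    using \<open>psi h x \<le> D\<close> unfolding pred_def by linarith
  then show ?thesis
    using \<open>0 < pred\<close> by (simp add: lm_ratio_def d_def[symmetric] pred_def[symmetric] pos_le_divide_eq)
qed

lemma lipschitz_matrix_bounded_on_bounded:
  fixes G :: "'a::real_normed_vector \<Rightarrow> real^'n^'m"
  assumes "bounded S" and lipschitz: "\<And>y z. onorm (\<lambda>v. (G y - G z) *v v) \<le> L * norm (y - z)"
  obtains C where "0 \<le> C" "\<And>y v. y \<in> S \<Longrightarrow> norm (G y *v v) \<le> C * norm v"
proof -
  obtain b where "0 < b" and b: "\<And>y. y \<in> S \<Longrightarrow> norm y \<le> b"
    using \<open>bounded S\<close> bounded_pos by blast
  have "norm (G y *v v) \<le> (onorm ((*v) (G 0)) + \<bar>L\<bar> * b) * norm v" if "y \<in> S" for y v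
  proof -
    have "onorm (\<lambda>v. (G y - G 0) *v v) \<le> \<bar>L\<bar> * b"
      using lipschitz[of y 0] b[OF that] mult_mono[OF abs_ge_self b[OF that] abs_ge_zero norm_ge_zero, of L]
      by simp
    have "norm ((G y - G 0) *v v) \<le> onorm ((*v) (G y - G 0)) * norm v"
      by (rule onorm[OF matrix_vector_mul_bounded_linear])
    also have "\<dots> \<le> \<bar>L\<bar> * b * norm v"
      using \<open>onorm (\<lambda>v. (G y - G 0) *v v) \<le> \<bar>L\<bar> * b\<close> by (rule mult_right_mono) simp
    finally have "norm ((G y - G 0) *v v) \<le> \<bar>L\<bar> * b * norm v" .
    have "G y *v v = G 0 *v v + (G y - G 0) *v v"
      by (simp add: matrix_vector_mult_diff_rdistrib)
    then have "norm (G y *v v) \<le> norm (G 0 *v v) + norm ((G y - G 0) *v v)"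
      by (metis norm_triangle_ineq)
    also have "\<dots> \<le> onorm ((*v) (G 0)) * norm v + \<bar>L\<bar> * b * norm v"
      using onorm[OF matrix_vector_mul_bounded_linear, of "G 0" v] \<open>norm ((G y - G 0) *v v) \<le> \<bar>L\<bar> * b * norm v\<close>
      by (rule add_mono)
    finally show ?thesis
      by (simp add: distrib_right)
  qed
  moreover have "0 \<le> onorm ((*v) (G 0)) + \<bar>L\<bar> * b"
    using \<open>0 < b\<close> by (simp add: onorm_pos_le matrix_vector_mul_bounded_linear)
  ultimately show ?thesis
    using that by blast
qed

lemma geometric_search_exit_le:
  fixes l0 \<rho> \<Lambda> \<upsilon>1 \<upsilon>2 :: real
  assumes large: "\<And>l. \<Lambda> \<le> l \<Longrightarrow> \<upsilon>2 \<le> r l" and "\<upsilon>1 \<le> \<upsilon>2" and "0 \<le> \<rho>"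
    and rejected: "\<And>j. j < p \<Longrightarrow> r (l0 * \<rho> ^ j) < \<upsilon>1"
  shows "l0 * \<rho> ^ p \<le> max l0 (\<rho> * \<Lambda>)"
proof (cases p)
  case (Suc j)
  have "l0 * \<rho> ^ j < \<Lambda>"
  proof (rule ccontr)
    assume "\<not> l0 * \<rho> ^ j < \<Lambda>"
    then have "\<upsilon>2 \<le> r (l0 * \<rho> ^ j)"
      by (simp add: large)
    moreover have "r (l0 * \<rho> ^ j) < \<upsilon>1"
      by (simp add: rejected Suc)
    ultimately show False
      using \<open>\<upsilon>1 \<le> \<upsilon>2\<close> by simp
  qed
  then have "\<rho> * (l0 * \<rho> ^ j) \<le> \<rho> * \<Lambda>"
    using \<open>0 \<le> \<rho>\<close> by (simp add: mult_left_mono)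
  then show ?thesis
    by (simp add: Suc mult_ac)
qed simp

locale lmtr_nonstopping_run =
  fixes h :: "real^'m \<Rightarrow> real^'n" and G :: "real^'m \<Rightarrow> real^'n^'m" and L :: real
    and x0 :: "real^'m" and \<epsilon> \<eta> \<rho>1 \<rho>2 \<upsilon>1 \<upsilon>2 \<mu>min \<xi>min \<xi>max \<omega>min \<omega>max \<theta>max :: real
    and \<xi> \<omega> \<theta> :: "nat \<Rightarrow> real"
    and x :: "nat \<Rightarrow> real^'m" and lam D :: "nat \<Rightarrow> real" and p :: "nat \<Rightarrow> nat"
  assumes deriv: "\<And>y. (h has_derivative (\<lambda>d. transpose (G y) *v d)) (at y)"
    and lipschitz: "\<And>y z. onorm (\<lambda>v. (G y - G z) *v v) \<le> L * norm (y - z)" and L_nonneg: "0 \<le> L"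
    and level_set_bounded: "bounded {y. psi h y \<le> psi h x0}"
    and \<epsilon>_pos: "0 < \<epsilon>" and \<eta>_nonneg: "0 \<le> \<eta>"
    and \<rho>2_nonneg: "0 \<le> \<rho>2" and \<rho>2_le_1: "\<rho>2 \<le> 1" and \<rho>1_ge_1: "1 \<le> \<rho>1"
    and \<upsilon>1_pos: "0 < \<upsilon>1" and \<upsilon>1_le_\<upsilon>2: "\<upsilon>1 \<le> \<upsilon>2" and \<upsilon>2_lt_1: "\<upsilon>2 < 1"
    and \<mu>min_pos: "0 < \<mu>min" and \<xi>min_nonneg: "0 \<le> \<xi>min" and \<omega>min_nonneg: "0 \<le> \<omega>min"
    and \<xi>min_\<omega>min_pos: "0 < \<xi>min + \<omega>min" and \<theta>max_lt_1: "\<theta>max < 1"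
    and \<xi>_bounds: "\<And>k. \<xi>min \<le> \<xi> k" "\<And>k. \<xi> k \<le> \<xi>max"
    and \<omega>_bounds: "\<And>k. \<omega>min \<le> \<omega> k" "\<And>k. \<omega> k \<le> \<omega>max"
    and \<theta>_bounds: "\<And>k. 0 \<le> \<theta> k" "\<And>k. \<theta> k \<le> \<theta>max"
    and init: "x 0 = x0" "lam 0 = 1" "D 0 = psi h x0"
    and norm_h_gt: "\<And>k. \<epsilon> < norm (h (x k))"
    and grad_psi_gt: "\<And>k. \<epsilon> < norm (grad_psi G h (x k))"
    and iteration: "\<And>k.
       (let \<mu>k = \<xi> k * norm (h (x k)) powr \<eta> + \<omega> k * norm (grad_psi G h (x k)) powr \<eta>;
            dd = (\<lambda>l. lm_dir G h (x k) (max \<mu>min (l * \<mu>k)));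
            rt = (\<lambda>l. lm_ratio G h (D k) (x k) (dd l));
            la = lam k * \<rho>1 ^ p k
        in (\<forall>j < p k. rt (lam k * \<rho>1 ^ j) < \<upsilon>1) \<and> \<upsilon>1 \<le> rt la
           \<and> x (Suc k) = x k + dd la
           \<and> lam (Suc k) = (if \<upsilon>2 \<le> rt la then \<rho>2 * \<rho>1 ^ p k * lam k else \<rho>1 ^ p k * lam k)
           \<and> D (Suc k) = (1 - \<theta> k) * psi h (x (Suc k)) + \<theta> k * D k)"
begin

definition \<mu> :: "nat \<Rightarrow> real" where
  "\<mu> k = \<xi> k * norm (h (x k)) powr \<eta> + \<omega> k * norm (grad_psi G h (x k)) powr \<eta>"

definition trial_step :: "nat \<Rightarrow> real \<Rightarrow> real^'m" where
  "trial_step k l = lm_dir G h (x k) (max \<mu>min (l * \<mu> k))"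

definition ratio :: "nat \<Rightarrow> real \<Rightarrow> real" where
  "ratio k l = lm_ratio G h (D k) (x k) (trial_step k l)"

definition lam_acc :: "nat \<Rightarrow> real" where
  "lam_acc k = lam k * \<rho>1 ^ p k"

definition pred :: "nat \<Rightarrow> real" where
  "pred k = qmodel G h (x k) 0 - qmodel G h (x k) (trial_step k (lam_acc k))"

lemma
  shows rejected: "j < p k \<Longrightarrow> ratio k (lam k * \<rho>1 ^ j) < \<upsilon>1"
    and accepted: "\<upsilon>1 \<le> ratio k (lam_acc k)"
    and x_Suc: "x (Suc k) = x k + trial_step k (lam_acc k)"
    and lam_Suc: "lam (Suc k) = (if \<upsilon>2 \<le> ratio k (lam_acc k) then \<rho>2 * lam_acc k else lam_acc k)"
    and D_Suc: "D (Suc k) = (1 - \<theta> k) * psi h (x (Suc k)) + \<theta> k * D k"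
  using iteration[of k, unfolded Let_def, folded \<mu>_def lam_acc_def]
  by (auto simp: ratio_def trial_step_def lam_acc_def mult_ac)

lemma grad_psi_nonzero: "grad_psi G h (x k) \<noteq> 0"
  using grad_psi_gt[of k] \<epsilon>_pos by auto

lemma pred_pos: "0 < pred k"
  unfolding pred_def trial_step_def
proof (rule lm_predicted_reduction_pos)
  show "0 < max \<mu>min (lam_acc k * \<mu> k)"
    using \<mu>min_pos by simp
qed (rule grad_psi_nonzero)

lemma sufficient_decrease: "\<upsilon>1 * pred k \<le> D k - psi h (x (Suc k))"
  using accepted[of k] pred_pos[of k]
  by (simp add: ratio_def lm_ratio_def pred_def x_Suc pos_le_divide_eq)

lemma psi_le_D: "psi h (x k) \<le> D k"
proof (cases k)
  case 0
  then show ?thesis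
    by (simp add: init)
next
  case (Suc j)
  have "0 < \<upsilon>1 * pred j"
    using pred_pos[of j] \<upsilon>1_pos by simp
  then have "psi h (x (Suc j)) \<le> D j"
    using sufficient_decrease[of j] by linarith
  then have "0 \<le> \<theta> j * (D j - psi h (x (Suc j)))"
    using \<theta>_bounds(1)[of j] by simp
  then show ?thesis
    by (simp add: Suc D_Suc algebra_simps)
qed

lemma D_decrease: "D (Suc k) \<le> D k - (1 - \<theta>max) * \<upsilon>1 * pred k"
proof -
  have "D (Suc k) - D k = (1 - \<theta> k) * (psi h (x (Suc k)) - D k)"
    by (simp add: D_Suc algebra_simps)
  also have "\<dots> \<le> (1 - \<theta> k) * (- (\<upsilon>1 * pred k))"
    using sufficient_decrease[of k] \<theta>_bounds[of k] \<theta>max_lt_1 by (intro mult_left_mono) auto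
  also have "\<dots> \<le> (1 - \<theta>max) * (- (\<upsilon>1 * pred k))"
    using \<theta>_bounds[of k] pred_pos[of k] \<upsilon>1_pos by (intro mult_right_mono_neg) auto
  finally show ?thesis
    by (simp add: algebra_simps)
qed

lemma psi_le_psi_x0: "psi h (x k) \<le> psi h x0"
proof -
  have "D k \<le> D 0"
  proof (induction k)
    case (Suc k)
    have "0 \<le> (1 - \<theta>max) * \<upsilon>1 * pred k"
      using pred_pos[of k] \<upsilon>1_pos \<theta>max_lt_1 by simp
    then show ?case
      using Suc D_decrease[of k] by linarith
  qed simp
  then show ?thesis
    using psi_le_D[of k] init by simp
qed

lemma norm_h_le: "norm (h (x k)) \<le> norm (h x0)"
  using psi_le_psi_x0[of k] by (simp add: psi_def power_mono_iff)

lemma jacobian_bounded: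
  obtains C where "0 \<le> C" "\<And>k v. norm (G (x k) *v v) \<le> C * norm v"
  using lipschitz_matrix_bounded_on_bounded[OF level_set_bounded lipschitz] psi_le_psi_x0
  by (metis mem_Collect_eq)

lemma grad_psi_bounded:
  obtains \<Gamma> where "\<And>k. norm (grad_psi G h (x k)) \<le> \<Gamma>"
proof -
  obtain C where "0 \<le> C" and C: "\<And>k v. norm (G (x k) *v v) \<le> C * norm v"
    using jacobian_bounded by blast
  have "norm (grad_psi G h (x k)) \<le> C * norm (h x0)" for k
    using C[of k "h (x k)"] mult_left_mono[OF norm_h_le[of k] \<open>0 \<le> C\<close>]
    unfolding grad_psi_def by linarith
  then show ?thesis
    using that by blast
qed

lemma \<xi>_nonneg: "0 \<le> \<xi> k"
  using \<xi>min_nonneg \<xi>_bounds(1) by (rule order_trans)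

lemma \<omega>_nonneg: "0 \<le> \<omega> k"
  using \<omega>min_nonneg \<omega>_bounds(1) by (rule order_trans)

lemma \<mu>_lower: "(\<xi>min + \<omega>min) * \<epsilon> powr \<eta> \<le> \<mu> k"
proof -
  have "\<xi>min * \<epsilon> powr \<eta> \<le> \<xi> k * norm (h (x k)) powr \<eta>"
    using \<xi>_bounds(1) \<xi>_nonneg \<epsilon>_pos \<eta>_nonneg norm_h_gt[of k] by (intro mult_mono powr_mono2) auto
  moreover have "\<omega>min * \<epsilon> powr \<eta> \<le> \<omega> k * norm (grad_psi G h (x k)) powr \<eta>"
    using \<omega>_bounds(1) \<omega>_nonneg \<epsilon>_pos \<eta>_nonneg grad_psi_gt[of k] by (intro mult_mono powr_mono2) auto
  ultimately show ?thesis
    unfolding \<mu>_def by (simp add: distrib_right)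
qed

lemma \<mu>_lower_pos: "0 < (\<xi>min + \<omega>min) * \<epsilon> powr \<eta>"
  using \<xi>min_\<omega>min_pos \<epsilon>_pos by simp

lemma \<mu>_bounded:
  obtains \<mu>bar where "\<And>k. \<mu> k \<le> \<mu>bar"
proof -
  obtain \<Gamma> where \<Gamma>: "\<And>k. norm (grad_psi G h (x k)) \<le> \<Gamma>"
    using grad_psi_bounded by blast
  have "\<mu> k \<le> \<xi>max * norm (h x0) powr \<eta> + \<omega>max * \<Gamma> powr \<eta>" for k
  proof -
    have "\<xi> k * norm (h (x k)) powr \<eta> \<le> \<xi>max * norm (h x0) powr \<eta>"
      using \<xi>_bounds(2) \<xi>_nonneg order_trans[OF \<xi>_nonneg \<xi>_bounds(2)] \<eta>_nonneg norm_h_le[of k]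
      by (intro mult_mono powr_mono2) auto
    moreover have "\<omega> k * norm (grad_psi G h (x k)) powr \<eta> \<le> \<omega>max * \<Gamma> powr \<eta>"
      using \<omega>_bounds(2) \<omega>_nonneg order_trans[OF \<omega>_nonneg \<omega>_bounds(2)] \<eta>_nonneg \<Gamma>[of k]
      by (intro mult_mono powr_mono2) auto
    ultimately show ?thesis
      unfolding \<mu>_def by linarith
  qed
  then show ?thesis
    using that by blast
qed

lemma very_successful_threshold:
  obtains \<Lambda> where "0 \<le> \<Lambda>" "\<And>k l. \<Lambda> \<le> l \<Longrightarrow> \<upsilon>2 \<le> ratio k l"
proof -
  obtain \<Gamma> where \<Gamma>: "\<And>k. norm (grad_psi G h (x k)) \<le> \<Gamma>"
    using grad_psi_bounded by blast
  define \<mu>low where "\<mu>low = (\<xi>min + \<omega>min) * \<epsilon> powr \<eta>"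
  define c where "c = norm (h x0) * L + (L * \<Gamma> / \<mu>min)\<^sup>2 / 2"
  define \<Lambda> where "\<Lambda> = c / ((1 - \<upsilon>2) * \<mu>low)"
  have "0 < \<mu>low" "0 < 1 - \<upsilon>2"
    using \<mu>_lower_pos \<upsilon>2_lt_1 unfolding \<mu>low_def by auto
  have "0 \<le> \<Lambda>"
    unfolding \<Lambda>_def c_def using \<open>0 < \<mu>low\<close> \<open>0 < 1 - \<upsilon>2\<close> L_nonneg by simp
  have "\<upsilon>2 \<le> ratio k l" if "\<Lambda> \<le> l" for k l
    unfolding ratio_def trial_step_def
  proof (rule lm_ratio_ge_large_mu[OF deriv lipschitz L_nonneg \<mu>min_pos max.cobounded1 psi_le_D norm_h_le \<Gamma>])
    show "grad_psi G h (x k) \<noteq> 0"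
      by (rule grad_psi_nonzero)
    have "c = (1 - \<upsilon>2) * (\<Lambda> * \<mu>low)"
      unfolding \<Lambda>_def using \<open>0 < \<mu>low\<close> \<open>0 < 1 - \<upsilon>2\<close> by simp
    also have "\<dots> \<le> (1 - \<upsilon>2) * (l * \<mu> k)"
      using that \<open>0 \<le> \<Lambda>\<close> \<open>0 < \<mu>low\<close> \<open>0 < 1 - \<upsilon>2\<close> \<mu>_lower[of k]
      by (intro mult_left_mono mult_mono) (auto simp: \<mu>low_def)
    also have "\<dots> \<le> (1 - \<upsilon>2) * max \<mu>min (l * \<mu> k)"
      using \<open>0 < 1 - \<upsilon>2\<close> by (intro mult_left_mono) auto
    finally show "norm (h x0) * L + (L * \<Gamma> / \<mu>min)\<^sup>2 / 2 \<le> (1 - \<upsilon>2) * max \<mu>min (l * \<mu> k)"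
      unfolding c_def .
  qed
  with \<open>0 \<le> \<Lambda>\<close> show ?thesis
    using that by blast
qed

lemma lam_nonneg: "0 \<le> lam k"
proof (induction k)
  case (Suc k)
  then have "0 \<le> lam_acc k"
    using \<rho>1_ge_1 by (simp add: lam_acc_def)
  then show ?case
    using \<rho>2_nonneg by (simp add: lam_Suc)
qed (simp add: init)

lemma lam_acc_nonneg: "0 \<le> lam_acc k"
  using lam_nonneg[of k] \<rho>1_ge_1 by (simp add: lam_acc_def)

lemma lam_acc_bounded:
  obtains B where "\<And>k. lam_acc k \<le> B"
proof -
  obtain \<Lambda> where "0 \<le> \<Lambda>" and \<Lambda>: "\<And>k l. \<Lambda> \<le> l \<Longrightarrow> \<upsilon>2 \<le> ratio k l"
    using very_successful_threshold by blast
  have acc_le: "lam_acc k \<le> max (lam k) (\<rho>1 * \<Lambda>)" for k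
    unfolding lam_acc_def
  proof (rule geometric_search_exit_le)
    show "\<And>l. \<Lambda> \<le> l \<Longrightarrow> \<upsilon>2 \<le> ratio k l"
      by (rule \<Lambda>)
    show "\<And>j. j < p k \<Longrightarrow> ratio k (lam k * \<rho>1 ^ j) < \<upsilon>1"
      by (rule rejected)
    show "0 \<le> \<rho>1"
      using \<rho>1_ge_1 by linarith
  qed (rule \<upsilon>1_le_\<upsilon>2)
  have lam_le: "lam k \<le> max 1 (\<rho>1 * \<Lambda>)" for k
  proof (induction k)
    case (Suc k)
    have "lam (Suc k) \<le> lam_acc k"
      using lam_acc_nonneg[of k] \<rho>2_nonneg \<rho>2_le_1 mult_left_le_one_le[of "lam_acc k" \<rho>2]
      by (simp add: lam_Suc)
    then show ?case
      using acc_le[of k] Suc by linarith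
  qed (simp add: init)
  have "lam_acc k \<le> max 1 (\<rho>1 * \<Lambda>)" for k
    using acc_le[of k] max.boundedI[OF lam_le[of k] max.cobounded2] by (rule order_trans)
  then show ?thesis
    using that by blast
qed

lemma pred_lower_bound:
  obtains c where "0 < c" "\<And>k. c \<le> pred k"
proof -
  obtain C where C: "\<And>k v. norm (G (x k) *v v) \<le> C * norm v"
    using jacobian_bounded by blast
  obtain B where B: "\<And>k. lam_acc k \<le> B"
    using lam_acc_bounded by blast
  obtain \<mu>bar where \<mu>bar: "\<And>k. \<mu> k \<le> \<mu>bar"
    using \<mu>_bounded by blast
  define M where "M = max (2 * C\<^sup>2) (max \<mu>min (B * \<mu>bar))"
  have "0 < M"
    unfolding M_def using \<mu>min_pos by (simp add: less_max_iff_disj)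
  have "\<epsilon>\<^sup>2 / (2 * M) \<le> pred k" for k
  proof -
    have "0 \<le> \<mu> k"
      using \<mu>_lower[of k] \<mu>_lower_pos by linarith
    moreover have "0 \<le> B"
      using lam_acc_nonneg B by (rule order_trans)
    ultimately have "lam_acc k * \<mu> k \<le> B * \<mu>bar"
      using B[of k] \<mu>bar[of k] by (intro mult_mono)
    then have "max (2 * C\<^sup>2) (max \<mu>min (lam_acc k * \<mu> k)) \<le> M"
      unfolding M_def by auto
    have "\<epsilon>\<^sup>2 \<le> (norm (grad_psi G h (x k)))\<^sup>2"
      using grad_psi_gt[of k] \<epsilon>_pos by (simp add: power_mono)
    also have "\<dots> \<le> 2 * max (2 * C\<^sup>2) (max \<mu>min (lam_acc k * \<mu> k)) * pred k"
      unfolding pred_def trial_step_def using \<mu>min_pos C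
      by (intro grad_psi_sq_le_predicted_reduction) auto
    also have "\<dots> \<le> 2 * M * pred k"
      using \<open>max (2 * C\<^sup>2) (max \<mu>min (lam_acc k * \<mu> k)) \<le> M\<close> pred_pos[of k] by simp
    finally show ?thesis
      using \<open>0 < M\<close> by (simp add: pos_divide_le_eq mult.commute)
  qed
  moreover have "0 < \<epsilon>\<^sup>2 / (2 * M)"
    using \<epsilon>_pos \<open>0 < M\<close> by simp
  ultimately show ?thesis
    using that by blast
qed

theorem nonstopping_run_impossible: False
proof -
  obtain c where "0 < c" and c: "\<And>k. c \<le> pred k"
    using pred_lower_bound by blast
  define \<delta> where "\<delta> = (1 - \<theta>max) * \<upsilon>1 * c"
  have "0 < \<delta>"
    unfolding \<delta>_def using \<upsilon>1_pos \<theta>max_lt_1 \<open>0 < c\<close> by simp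
  have D_le: "D k \<le> D 0 - real k * \<delta>" for k
  proof (induction k)
    case (Suc k)
    have "\<delta> \<le> (1 - \<theta>max) * \<upsilon>1 * pred k"
      unfolding \<delta>_def using c[of k] \<upsilon>1_pos \<theta>max_lt_1 by (intro mult_left_mono) auto
    then show ?case
      using Suc D_decrease[of k] by (simp add: algebra_simps)
  qed simp
  obtain n where "D 0 / \<delta> < real n"
    using reals_Archimedean2 by blast
  then have "D 0 - real n * \<delta> < 0"
    using \<open>0 < \<delta>\<close> by (simp add: pos_divide_less_eq)
  moreover have "0 \<le> psi h (x n)"
    by (simp add: psi_def)
  ultimately show False
    using D_le[of n] psi_le_D[of n] by linarith
qed

end

theorem theorem4:
  fixes h :: "real^'m \<Rightarrow> real^'n" and G :: "real^'m \<Rightarrow> real^'n^'m"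
    and xs :: "real^'m" and \<delta> \<beta> rr L :: real
    and x0 :: "real^'m" and \<epsilon> \<eta> \<rho>1 \<rho>2 \<upsilon>1 \<upsilon>2 \<mu>min :: real
    and \<xi>min \<xi>max \<omega>min \<omega>max \<theta>min \<theta>max :: real
    and \<xi> \<omega> \<theta> :: "nat \<Rightarrow> real"
    and x :: "nat \<Rightarrow> real^'m" and lam D :: "nat \<Rightarrow> real" and p :: "nat \<Rightarrow> nat"
  assumes deriv: "\<And>y. (h has_derivative (\<lambda>d. transpose (G y) *v d)) (at y)"
    and G_cont: "continuous_on UNIV G"
    \<comment> \<open>(A1)\<close>
    and A1: "h xs = 0" "0 < \<delta>" "\<delta> \<le> 1" "0 < \<beta>" "0 < rr" "rr < 1"
       "\<And>y. norm (y - xs) \<le> rr \<Longrightarrow> \<beta> * infdist y {z. h z = 0} \<le> norm (h y) powr \<delta>"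
    \<comment> \<open>(A2)\<close>
    and A2: "bounded {y. psi h y \<le> psi h x0}"
    \<comment> \<open>(A3)\<close>
    and A3: "\<And>y z. onorm (\<lambda>v. (G y - G z) *v v) \<le> L * norm (y - z)"
    \<comment> \<open>parameters\<close>
    and par: "0 < \<epsilon>" "0 < \<eta>" "\<eta> < 4 * \<delta>" "0 < \<rho>2" "\<rho>2 < 1" "1 < \<rho>1"
       "0 < \<upsilon>1" "\<upsilon>1 < \<upsilon>2" "\<upsilon>2 < 1" "0 < \<mu>min"
       "0 \<le> \<xi>min" "\<xi>min \<le> \<xi>max" "0 \<le> \<omega>min" "\<omega>min \<le> \<omega>max" "0 < \<xi>min + \<omega>min"
       "0 \<le> \<theta>min" "\<theta>min \<le> \<theta>max" "\<theta>max < 1"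
    and seqs: "\<And>k. \<xi>min \<le> \<xi> k \<and> \<xi> k \<le> \<xi>max"
       "\<And>k. \<omega>min \<le> \<omega> k \<and> \<omega> k \<le> \<omega>max"
       "\<And>k. \<theta>min \<le> \<theta> k \<and> \<theta> k \<le> \<theta>max"
    \<comment> \<open>the sequence generated by LMTR\<close>
    and init: "x 0 = x0" "lam 0 = 1" "D 0 = psi h x0"
    and inner: "\<And>k. (\<forall>j\<le>k. \<not> (norm (h (x j)) \<le> \<epsilon> \<or> norm (grad_psi G h (x j)) \<le> \<epsilon>)) \<Longrightarrow>
       (let \<mu>k = \<xi> k * norm (h (x k)) powr \<eta> + \<omega> k * norm (grad_psi G h (x k)) powr \<eta>;
            dd = (\<lambda>l. lm_dir G h (x k) (max \<mu>min (l * \<mu>k)));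
            rt = (\<lambda>l. lm_ratio G h (D k) (x k) (dd l));
            la = lam k * \<rho>1 ^ p k
        in (\<forall>j < p k. rt (lam k * \<rho>1 ^ j) < \<upsilon>1) \<and> \<upsilon>1 \<le> rt la
           \<and> x (Suc k) = x k + dd la
           \<and> lam (Suc k) = (if \<upsilon>2 \<le> rt la then \<rho>2 * \<rho>1 ^ p k * lam k else \<rho>1 ^ p k * lam k)
           \<and> D (Suc k) = (1 - \<theta> k) * psi h (x (Suc k)) + \<theta> k * D k)"
  shows "(\<exists>K. (norm (h (x K)) \<le> \<epsilon> \<or> norm (grad_psi G h (x K)) \<le> \<epsilon>)
              \<and> (\<forall>j<K. \<not> (norm (h (x j)) \<le> \<epsilon> \<or> norm (grad_psi G h (x j)) \<le> \<epsilon>)))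
       \<or> ((\<forall>k. \<not> (norm (h (x k)) \<le> \<epsilon> \<or> norm (grad_psi G h (x k)) \<le> \<epsilon>))
          \<and> (\<exists>c. D \<longlonglongrightarrow> c \<and> (\<lambda>k. psi h (x k)) \<longlonglongrightarrow> c)
          \<and> (\<lambda>k. norm (grad_psi G h (x k))) \<longlonglongrightarrow> 0
          \<and> (\<forall>z r. strict_mono r \<and> (x \<circ> r) \<longlonglongrightarrow> z \<longrightarrow> grad_psi G h z = 0))"
proof -
  let ?stops = "\<lambda>k. norm (h (x k)) \<le> \<epsilon> \<or> norm (grad_psi G h (x k)) \<le> \<epsilon>"
  have "\<exists>K. ?stops K"
  proof (rule ccontr)
    assume "\<nexists>K. ?stops K"
    then have running: "\<And>k. \<epsilon> < norm (h (x k))" "\<And>k. \<epsilon> < norm (grad_psi G h (x k))"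
      and iteration: "\<And>k. \<forall>j\<le>k. \<not> ?stops j"
      by (auto simp: not_le)
    have lipschitz: "\<And>y z. onorm (\<lambda>v. (G y - G z) *v v) \<le> \<bar>L\<bar> * norm (y - z)"
      using A3 by (meson abs_ge_self mult_right_mono norm_ge_zero order_trans)
    have \<theta>_nonneg: "\<And>k. 0 \<le> \<theta> k"
      using seqs(3) par(16) by (meson order_trans)
    interpret lmtr_nonstopping_run h G "\<bar>L\<bar>" x0 \<epsilon> \<eta> \<rho>1 \<rho>2 \<upsilon>1 \<upsilon>2 \<mu>min \<xi>min \<xi>max \<omega>min \<omega>max \<theta>max
        \<xi> \<omega> \<theta> x lam D p
      by (unfold_locales; (rule deriv lipschitz A2 init running inner[OF iteration] \<theta>_nonneg abs_ge_zero
          | use par in linarith | use seqs in blast))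
    show False
      by (rule nonstopping_run_impossible)
  qed
  define K where "K = (LEAST K. ?stops K)"
  have "?stops K"
    unfolding K_def using \<open>\<exists>K. ?stops K\<close> by (rule LeastI_ex)
  moreover have "\<forall>j < K. \<not> ?stops j"
    unfolding K_def using not_less_Least by blast
  ultimately have "\<exists>K. ?stops K \<and> (\<forall>j < K. \<not> ?stops j)"
    by blast
  then show ?thesis
    by (rule disjI1)
qed

end
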